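(* Consider the electric ride-hailing vehicle routing and charging (eRIVER) model described in the context. Suppose that the meeting-probability function $f$ and the charging-waiting-time function $g$ are continuous in the aggregate vehicle flows $(\mathbf{y},\mathbf{z})$. Then there exists at least one mean-field equilibrium of the eRIVER problem, i.e. a mean policy $\bar{\pi}^*\in\Omega$ such that $$\bar{\pi}^* \in \arg\max_{\pi\in\Omega} V_\rho\big(\pi \,\big|\, \mu(\bar{\pi}^* )\big).$$
   Context: Market. Time is discretized into steps $t=0,1,\dots,T-1$ of equal length. There is a finite set $\mathcal{N}$ of service zones and a finite set $\mathcal{L}$ of charging stations, each station having capacity $C$ and charging efficiency $e$. Travel times $\tau_{ij}$ (zone $i$ to zone $j$) and $\tau_{il}$ (zone $i$ to station $l$) are positive integers (in time steps). For each zone $i$, $\mathcal{N}_i$ denotes zone $i$ together with its neighbouring zones and $\mathcal{L}_i$ the stations at the boundary of zone $i$; for each station $l$, $\mathcal{N}_l$ denotes its neighbouring zones. A fleet of $M$ homogeneous electric vehicles operates, each with battery capacity $B$ (an integer); the state of charge (SOC) $b\in\{0,\dots,B\}$ decreases by one unit per time step of driving. A vehicle that starts charging at SOC $b<B$ charges for $\hat{\tau}_b=\lceil (B-b)/e\rceil$ time steps and leaves the station fully charged. Passenger demand $q^t_i\ge 0$ arrives in zone $i$ at time $t$, a fraction $\alpha^t_{ij}$ of which travels to zone $j$ (with $\sum_j\alpha^t_{ij}=1$); $p_{jk}$ is the fare of a trip from $j$ to $k$, $c_l$ the charging price per time step at station $l$, and $\kappa$ a penalty for running out of battery. Aggregate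 flows (nonnegative reals, the fleet being treated as a continuum). $y^t_{i,b}$ = idle vehicles in zone $i$ at time $t$ with SOC $b$; $z^t_{l,b}$ = vehicles arriving at station $l$ at time $t$ with SOC $b$; $\mathbf{y}=\{y^t_{i,b}\}$, $\mathbf{z}=\{z^t_{l,b}\}$. The meeting probability (probability that an idle vehicle in zone $i$ at time $t$ picks up a passenger after one step of search) is $m^t_i=f(q^t_i,y^t_i;\theta^t_i)\in[0,1]$, where $y^t_i=\sum_{b>0}y^t_{i,b}$ and $\theta^t_i$ is a given parameter, with $f$ nondecreasing in $q$ and nonincreasing in $y$. The waiting time $\omega\in\mathbb{N}$ before starting to charge, for a vehicle arriving at station $l$ at time $t$, has probability mass function $w^t_l(\omega)=g(\mathbf{z}_{\le t,l},\omega)$, where $\mathbf{z}_{\le t,l}=\{z^{t'}_{l,b}\}_{t'\le t,b}$, $w^t_l(\omega)\in[0,1]$ and $\sum_\omega w^t_l(\omega)=1$. Individual MDP. States are $s=(t,k,b)$ with $k\in\mathcal{N}\cup\mathcal{L}\cup\{0\}$ ($k=0$ meaning offline after running out of battery). In zone $i$ the feasible actions are $\mathcal{N}_i\cup\mathcal{L}$; a vehicle about to leave station $l$ (with SOC $B$) chooses an action in $\mathcal{N}_l$; an offline vehicle stays offline. Transitions: from $(t,i,b)$ choosing zone $j$, the vehicle fails to find a passenger with probability $1-m^t_j$ and moves to $(t+1,j,b-1)$; with probability $m^t_j\alpha^t_{jk}$ it picks up a passenger to $k$ (reward $p_{jk}$) and, if it has sufficient battery, moves to $(t+1+\tau_{jk},k,b-1-\tau_{jk})$.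 Choosing station $l$, the vehicle travels to $l$, waits $\omega$ steps with probability $w^{t+\tau_{il}}_l(\omega)$, then charges (reward $-c_l\hat{\tau}_{b-\tau_{il}}$) and moves to $(t+\tau_{il}+\omega+\hat{\tau}_{b-\tau_{il}},l,B)$. Running out of battery leads to the offline state with reward $\kappa$ (a large penalty); all other rewards are zero. A policy $\pi$ maps each state to a probability distribution over feasible actions; $\Omega$ is the (compact) set of such policies. Given an initial state distribution $\rho$ and flows $(\mathbf{y},\mathbf{z})$ (which determine the transition probabilities through $m$ and $w$), the value is the undiscounted expected total reward $V_\rho(\pi|\mathbf{y},\mathbf{z})=\mathbb{E}_{s_0\sim\rho}\big[\mathbb{E}_{a\sim\pi(\cdot|s),\,(s,a,s')\sim P(\cdot|\mathbf{y},\mathbf{z})}[\sum_{(s,a,s')}r(s,a,s')\mid s_0]\big]$. Mean policy and flow map $\mu$. The mean policy is $\bar{\pi}=\int_\Omega \pi\,\delta(\pi)\,d\pi$ for a density $\delta$ of policies over the fleet. Let $x^t_{k,b}$ be the flow of vehicles at location $k\in\mathcal{N}\cup\mathcal{L}$ at time $t$ with SOC $b$ about to make a decision, with $x^0_{k,b}=M\rho((0,k,b))$. The flows are generated recursively by $y^t_i=\sum_{k\in\mathcal{N}_i}\sum_{b>0}x^t_{k,b}\,\bar{\pi}(i|(t,k,b))+\sum_{k\in\mathcal{L}_i}x^t_{k,B}\,\bar{\pi}(i|(t,k,B))$ (and correspondingly per SOC $b$), $z^t_l=\sum_{k\in\mathcal{N}}\sum_{b\ge\tau_{kl}}x^{t-\tau_{kl}}_{k,b}\,\bar{\pi}(l|(t-\tau_{kl},k,b))$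 (and correspondingly per SOC), for $k\in\mathcal{N}$: $x^t_{k,b}=(1-m^{t-1}_k)y^{t-1}_{k,b+1}+\sum_{t'=1}^{t}\sum_{i\in\mathcal{N}:\,t=t'+1+\tau_{ik}}\alpha^{t'}_{ik}m^{t'}_i y^{t'}_{i,b+\tau_{ik}}$, for $k\in\mathcal{L}$: $x^t_{k,B}=\sum_b\sum_\omega w^{t-\omega-\hat{\tau}_b}_k(\omega)\,z^{t-\omega-\hat{\tau}_b}_{k,b}$. The resulting map from mean policy to flows is denoted $(\mathbf{y},\mathbf{z})=\mu(\bar{\pi})$. A mean policy $\bar{\pi}^*$ is a mean-field equilibrium (MFE) of eRIVER if $\bar{\pi}^*\in\arg\max_{\pi}V_\rho(\pi|\mu(\bar{\pi}^* ))$. *)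

theory Defs
  imports "HOL-Analysis.Analysis"
begin

text \<open>Locations of the individual MDP: a service zone, a charging station,
  or the offline state (written 0 in the paper).  The same type is used for
  actions: Zone j = go to zone j, Stn l = go to station l, Off = stay offline.\<close>

datatype ('z, 'l) loc = Zone 'z | Stn 'l | Off

lemma UNIV_loc: "(UNIV :: ('z,'l) loc set) = range Zone \<union> range Stn \<union> {Off}"
  proof (intro set_eqI iffI)
  fix x :: "('z,'l) loc"
  show "x \<in> range Zone \<union> range Stn \<union> {Off}" by (cases x) auto
qed auto

instance loc :: (finite, finite) finite
  by standard (simp add: UNIV_loc)

record ('z, 'l, 'th) eriver =
  horizon :: nat                         \<comment> \<open>T; decision epochs t = 0..T-1\<close>
  Bmax    :: nat
  fleet   :: real
  eff     :: real
  tz      :: "'z \<Rightarrow> 'z \<Rightarrow> nat"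
  tl      :: "'z \<Rightarrow> 'l \<Rightarrow> nat"
  nbr     :: "'z \<Rightarrow> 'z set"            \<comment> \<open>N_i: zone i and its neighbouring zones\<close>
  bdry    :: "'l \<Rightarrow> 'z set"
  dem     :: "nat \<Rightarrow> 'z \<Rightarrow> real"
  alpha   :: "nat \<Rightarrow> 'z \<Rightarrow> 'z \<Rightarrow> real"
  fare    :: "'z \<Rightarrow> 'z \<Rightarrow> real"
  cprice  :: "'l \<Rightarrow> real"
  kappa   :: real                        \<comment> \<open>running-out-of-battery reward\<close>
  fmeet   :: "real \<Rightarrow> real \<Rightarrow> 'th \<Rightarrow> real"
  theta   :: "nat \<Rightarrow> 'z \<Rightarrow> 'th"
  gwait   :: "nat \<Rightarrow> (nat \<Rightarrow> nat \<Rightarrow> real) \<Rightarrow> nat \<Rightarrow> real"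
     \<comment> \<open>g(z_{<=t,l}, omega): arguments t, the history (t',b) |-> z^{t'}_{l,b}
        (zero for t' > t or b > B), and omega\<close>
  rho     :: "('z,'l) loc \<Rightarrow> nat \<Rightarrow> real"

type_synonym ('z,'l) policy = "nat \<Rightarrow> ('z,'l) loc \<Rightarrow> nat \<Rightarrow> ('z,'l) loc \<Rightarrow> real"
  \<comment> \<open>pi t k b a = probability of action a in state (t,k,b)\<close>
type_synonym ('z,'l) xflow = "nat \<Rightarrow> ('z,'l) loc \<Rightarrow> nat \<Rightarrow> real"
type_synonym 'z yflow = "nat \<Rightarrow> 'z \<Rightarrow> nat \<Rightarrow> real"
type_synonym 'l zflow = "nat \<Rightarrow> 'l \<Rightarrow> nat \<Rightarrow> real"

definition stations_of :: "('z,'l,'th,'m) eriver_scheme \<Rightarrow> 'z \<Rightarrow> 'l set" where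
  "stations_of E i = {l. i \<in> bdry E l}"

definition feasible :: "('z,'l,'th,'m) eriver_scheme \<Rightarrow> ('z,'l) loc \<Rightarrow> ('z,'l) loc set" where
  "feasible E k = (case k of
       Zone i \<Rightarrow> Zone ` nbr E i \<union> range Stn
     | Stn l \<Rightarrow> Zone ` bdry E l
     | Off \<Rightarrow> {Off})"

definition Omega :: "('z::finite,'l::finite,'th,'m) eriver_scheme \<Rightarrow> ('z,'l) policy set" where
  "Omega E = {\<pi>. \<forall>t k b. (\<forall>a. 0 \<le> \<pi> t k b a) \<and> (\<forall>a. a \<notin> feasible E k \<longrightarrow> \<pi> t k b a = 0)
                        \<and> (\<Sum>a\<in>feasible E k. \<pi> t k b a) = 1}"

definition meet :: "('z,'l,'th,'m) eriver_scheme \<Rightarrow> 'z yflow \<Rightarrow> nat \<Rightarrow> 'z \<Rightarrow> real" where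
  "meet E y t i = fmeet E (dem E t i) (\<Sum>b\<in>{1..Bmax E}. y t i b) (theta E t i)"

definition zhist :: "('z,'l,'th,'m) eriver_scheme \<Rightarrow> 'l zflow \<Rightarrow> nat \<Rightarrow> 'l \<Rightarrow> nat \<Rightarrow> nat \<Rightarrow> real" where
  "zhist E z t l = (\<lambda>t' b. if t' \<le> t \<and> b \<le> Bmax E then z t' l b else 0)"

definition waitp :: "('z,'l,'th,'m) eriver_scheme \<Rightarrow> 'l zflow \<Rightarrow> nat \<Rightarrow> 'l \<Rightarrow> nat \<Rightarrow> real" where
  "waitp E z t l \<omega> = gwait E t (zhist E z t l) \<omega>"

definition hist_dom :: "('z,'l,'th,'m) eriver_scheme \<Rightarrow> nat \<Rightarrow> (nat \<Rightarrow> nat \<Rightarrow> real) set" where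
  "hist_dom E t = {h. (\<forall>t' b. 0 \<le> h t' b) \<and> (\<forall>t' b. t < t' \<or> Bmax E < b \<longrightarrow> h t' b = 0)}"

definition chtime :: "('z,'l,'th,'m) eriver_scheme \<Rightarrow> nat \<Rightarrow> nat" where
  "chtime E b = nat \<lceil>real (Bmax E - b) / eff E\<rceil>"

definition xnew :: "('z::finite,'l::finite,'th,'m) eriver_scheme \<Rightarrow> 'z yflow \<Rightarrow> 'l zflow
                    \<Rightarrow> nat \<Rightarrow> ('z,'l) loc \<Rightarrow> nat \<Rightarrow> real" where
  "xnew E y z t k b =
    (if t = 0 then (case k of Off \<Rightarrow> 0 | _ \<Rightarrow> fleet E * rho E k b)
     else (case k of
       Zone k' \<Rightarrow> (1 - meet E y (t - 1) k') * y (t - 1) k' (b + 1)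
                + (\<Sum>t'\<in>{1..t}. \<Sum>i\<in>UNIV.
                     if t = t' + 1 + tz E i k'
                     then alpha E t' i k' * meet E y t' i * y t' i (b + tz E i k') else 0)
     | Stn l \<Rightarrow> (if b = Bmax E then
                  (\<Sum>b'\<in>{0..Bmax E}. \<Sum>\<omega>\<in>{0..t}.
                     if \<omega> + chtime E b' \<le> t
                     then waitp E z (t - \<omega> - chtime E b') l \<omega> * z (t - \<omega> - chtime E b') l b'
                     else 0)
                else 0)
     | Off \<Rightarrow> 0))"

definition ynew :: "('z::finite,'l::finite,'th,'m) eriver_scheme \<Rightarrow> ('z,'l) policy \<Rightarrow> ('z,'l) xflow
                    \<Rightarrow> nat \<Rightarrow> 'z \<Rightarrow> nat \<Rightarrow> real" where
  "ynew E \<pi> x t i b =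
     (\<Sum>k\<in>nbr E i. x t (Zone k) b * \<pi> t (Zone k) b (Zone i))
     + (if b = Bmax E then (\<Sum>l\<in>stations_of E i. x t (Stn l) b * \<pi> t (Stn l) b (Zone i)) else 0)"

definition znew :: "('z::finite,'l::finite,'th,'m) eriver_scheme \<Rightarrow> ('z,'l) policy \<Rightarrow> ('z,'l) xflow
                    \<Rightarrow> nat \<Rightarrow> 'l \<Rightarrow> nat \<Rightarrow> real" where
  "znew E \<pi> x t l b =
     (\<Sum>k\<in>UNIV. if tl E k l \<le> t
                then x (t - tl E k l) (Zone k) (b + tl E k l) * \<pi> (t - tl E k l) (Zone k) (b + tl E k l) (Stn l)
                else 0)"

text \<open>One step of the recursion: given flows correct at all times < t,
  compute z^t, then x^t, then y^t.\<close>
definition upd :: "('z::finite,'l::finite,'th,'m) eriver_scheme \<Rightarrow> ('z,'l) policy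
      \<Rightarrow> ('z,'l) xflow \<times> 'z yflow \<times> 'l zflow \<Rightarrow> nat \<Rightarrow> ('z,'l) xflow \<times> 'z yflow \<times> 'l zflow" where
  "upd E \<pi> s t = (case s of (x, y, z) \<Rightarrow>
     (let z' = z(t := znew E \<pi> x t);
          x' = x(t := xnew E y z' t);
          y' = y(t := ynew E \<pi> x' t)
      in (x', y', z')))"

fun flows_upto :: "('z::finite,'l::finite,'th,'m) eriver_scheme \<Rightarrow> ('z,'l) policy
      \<Rightarrow> nat \<Rightarrow> ('z,'l) xflow \<times> 'z yflow \<times> 'l zflow" where
  "flows_upto E \<pi> 0 = upd E \<pi> (\<lambda>_ _ _. 0, \<lambda>_ _ _. 0, \<lambda>_ _ _. 0) 0"
| "flows_upto E \<pi> (Suc n) = upd E \<pi> (flows_upto E \<pi> n) (Suc n)"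

definition mu :: "('z::finite,'l::finite,'th,'m) eriver_scheme \<Rightarrow> ('z,'l) policy \<Rightarrow> 'z yflow \<times> 'l zflow" where
  "mu E \<pi> = ((\<lambda>t. fst (snd (flows_upto E \<pi> t)) t), (\<lambda>t. snd (snd (flows_upto E \<pi> t)) t))"

text \<open>Expected reward-to-go of taking action a in state (t,k,b), given the
  continuation value Wn (a function of the next state).\<close>
definition Qval :: "('z::finite,'l::finite,'th,'m) eriver_scheme \<Rightarrow> (nat \<Rightarrow> ('z,'l) loc \<Rightarrow> nat \<Rightarrow> real)
      \<Rightarrow> 'z yflow \<Rightarrow> 'l zflow \<Rightarrow> nat \<Rightarrow> ('z,'l) loc \<Rightarrow> nat \<Rightarrow> ('z,'l) loc \<Rightarrow> real" where
  "Qval E Wn y z t k b a =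
    (case k of Off \<Rightarrow> 0
     | _ \<Rightarrow> (case a of
         Zone j \<Rightarrow>
           (if b = 0 then kappa E
            else (1 - meet E y t j) * Wn (t + 1) (Zone j) (b - 1)
               + (\<Sum>k'\<in>UNIV. meet E y t j * alpha E t j k' *
                    (if tz E j k' + 1 \<le> b
                     then fare E j k' + Wn (t + 1 + tz E j k') (Zone k') (b - 1 - tz E j k')
                     else kappa E)))
       | Stn l \<Rightarrow>
           (case k of
              Zone i \<Rightarrow>
                (if b < tl E i l then kappa E
                 else (\<Sum>\<omega>. waitp E z (t + tl E i l) l \<omega> *
                         (- cprice E l * real (chtime E (b - tl E i l))
                          + Wn (t + tl E i l + \<omega> + chtime E (b - tl E i l)) (Stn l) (Bmax E))))
            | _ \<Rightarrow> 0)
       | Off \<Rightarrow> 0))"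

text \<open>Value with d remaining decisions; states with t >= T are terminal.\<close>
primrec Wval :: "('z::finite,'l::finite,'th,'m) eriver_scheme \<Rightarrow> nat \<Rightarrow> ('z,'l) policy
      \<Rightarrow> 'z yflow \<Rightarrow> 'l zflow \<Rightarrow> nat \<Rightarrow> ('z,'l) loc \<Rightarrow> nat \<Rightarrow> real" where
  "Wval E 0 \<pi> y z t k b = 0"
| "Wval E (Suc d) \<pi> y z t k b =
     (if horizon E \<le> t then 0
      else (\<Sum>a\<in>feasible E k. \<pi> t k b a * Qval E (Wval E d \<pi> y z) y z t k b a))"

text \<open>V_rho(pi | y, z).  Every decision advances time by at least one step,
  so T decisions exhaust the horizon.\<close>
definition Vrho :: "('z::finite,'l::finite,'th,'m) eriver_scheme \<Rightarrow> ('z,'l) policy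
      \<Rightarrow> 'z yflow \<times> 'l zflow \<Rightarrow> real" where
  "Vrho E \<pi> yz = (case yz of (y, z) \<Rightarrow>
     (\<Sum>k\<in>UNIV. \<Sum>b\<in>{0..Bmax E}. rho E k b * Wval E (horizon E) \<pi> y z 0 k b))"

definition is_MFE :: "('z::finite,'l::finite,'th,'m) eriver_scheme \<Rightarrow> ('z,'l) policy \<Rightarrow> bool" where
  "is_MFE E \<pi>s \<longleftrightarrow> \<pi>s \<in> Omega E \<and> (\<forall>\<pi>\<in>Omega E. Vrho E \<pi> (mu E \<pi>s) \<le> Vrho E \<pi>s (mu E \<pi>s))"

end

theory Submission
  imports Defs
begin

(* The argument is Nash's proof for finite games.  Only the finitely many decision
   points with t < T and b <= B matter, so policies form a product of simplices inside a
   finite-dimensional cube.  The flows mu(pi) are built by a finite recursion from pi using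
   f and g, hence depend continuously on pi; so do the action values Q(pi) of the MDP played
   against mu(pi).  The improvement map
     pi(a) |-> (pi(a) + max 0 (Q(a) - V)) / (1 + sum_a' max 0 (Q(a') - V))
   is then continuous, and by Brouwer's theorem it has a fixed point.  At a fixed point no
   action improves on the mean value V at any decision point, and by backward induction over
   the horizon such a policy is a best response to its own flows. *)

section \<open>Brouwer's fixed point theorem on cubes of functions\<close>

definition unit_cube :: "'a set \<Rightarrow> ('a \<Rightarrow> real) set" where
  "unit_cube I = {x. (\<forall>i\<in>I. 0 \<le> x i \<and> x i \<le> 1) \<and> (\<forall>i. i \<notin> I \<longrightarrow> x i = 0)}"

lemma unit_cube_nonneg: "x \<in> unit_cube I \<Longrightarrow> 0 \<le> x i"
  unfolding unit_cube_def by (cases "i \<in> I") auto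

lemma unit_cube_eq_PiE: "unit_cube I = Pi\<^sub>E UNIV (\<lambda>i. if i \<in> I then {0..1} else {0})"
  unfolding unit_cube_def PiE_UNIV_domain Pi_iff by (auto split: if_splits)

lemma compact_unit_cube: "compact (unit_cube I)"
proof -
  have "compactin (product_topology (\<lambda>_. euclidean) UNIV) (unit_cube I)"
    unfolding unit_cube_eq_PiE compactin_PiE by auto
  then show ?thesis
    by (simp add: euclidean_product_topology compactin_euclidean_iff)
qed

lemma continuous_on_if_const [continuous_intros]:
  "(c \<Longrightarrow> continuous_on S f) \<Longrightarrow> (\<not> c \<Longrightarrow> continuous_on S g) \<Longrightarrow>
    continuous_on S (\<lambda>x. if c then f x else g x)"
  by (cases c) auto

lemma continuous_on_coordinate [continuous_intros]: "continuous_on S (\<lambda>x. x i)"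
  by (rule continuous_on_subset[OF continuous_on_product_coordinates]) simp

lemma tendsto_fun_iff_componentwise:
  fixes f :: "'c \<Rightarrow> 'a \<Rightarrow> 'b::topological_space"
  shows "(f \<longlongrightarrow> l) F \<longleftrightarrow> (\<forall>i. ((\<lambda>c. f c i) \<longlongrightarrow> l i) F)"
  using limitin_componentwise[of "\<lambda>_. euclidean" UNIV f l F]
  by (simp add: euclidean_product_topology)

(* The library's Brouwer theorem lives on Euclidean space types, but the dimension needed
   here depends on the data T and B.  So it is rederived from Kuhn's labelling lemma for cubes
   in nat => real and then transported to cubes over any finite index set. *)

(* A grid point gets label 0 in coordinate i if F does not decrease that coordinate (and it
   is not on the top face), label 1 otherwise; Kuhn's lemma yields a grid cell whose vertices
   carry both labels in every coordinate. *)
lemma kuhn_approximate_fixed_point: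
  fixes F :: "(nat \<Rightarrow> real) \<Rightarrow> nat \<Rightarrow> real"
  assumes into: "F \<in> unit_cube {..<N} \<rightarrow> unit_cube {..<N}" and p: "0 < p"
  obtains x u v where "x \<in> unit_cube {..<N}"
    and "\<And>i. i < N \<Longrightarrow> u i \<in> unit_cube {..<N} \<and> v i \<in> unit_cube {..<N} \<and>
           (\<forall>j. \<bar>u i j - x j\<bar> \<le> 1 / real p) \<and> (\<forall>j. \<bar>v i j - x j\<bar> \<le> 1 / real p) \<and>
           u i i \<le> F (u i) i \<and> F (v i) i \<le> v i i"
proof -
  let ?C = "unit_cube {..<N}"
  define grid :: "(nat \<Rightarrow> nat) \<Rightarrow> nat \<Rightarrow> real" where
    "grid q i = (if i < N then real (q i) / real p else 0)" for q i
  have grid_in: "grid q \<in> ?C" if "\<forall>i<N. q i \<le> p" for q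
    using that p unfolding grid_def unit_cube_def by auto
  define label :: "(nat \<Rightarrow> nat) \<Rightarrow> nat \<Rightarrow> nat" where
    "label q i = (if grid q i \<noteq> 1 \<and> grid q i \<le> F (grid q) i then 0 else 1)" for q i
  have label_0: "grid q i \<le> F (grid q) i" if "label q i = 0" for q i
    using that unfolding label_def by (auto split: if_splits)
  have label_1: "F (grid q) i \<le> grid q i" if "label q i \<noteq> 0" "i < N" "\<forall>i<N. q i \<le> p" for q i
  proof (cases "grid q i = 1")
    case True
    have "F (grid q) \<in> ?C" using into grid_in[OF that(3)] by (rule funcset_mem)
    then show ?thesis using True that(2) unfolding unit_cube_def by simp
  next
    case False
    then show ?thesis using that(1) unfolding label_def by (simp split: if_splits)
  qed
  have label_bin: "\<forall>q. (\<forall>i<N. q i \<le> p) \<longrightarrow> (\<forall>i<N. label q i = 0 \<or> label q i = 1)"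
    by (simp add: label_def)
  have label_lower: "\<forall>q. (\<forall>i<N. q i \<le> p) \<longrightarrow> (\<forall>i<N. q i = 0 \<longrightarrow> label q i = 0)"
  proof (intro allI impI)
    fix q i assume q: "\<forall>i<N. q i \<le> p" and i: "i < N" and "q i = 0"
    then have "grid q i = 0" unfolding grid_def by simp
    moreover have "F (grid q) \<in> ?C" using into grid_in[OF q] by (rule funcset_mem)
    ultimately show "label q i = 0" using i unfolding label_def unit_cube_def by simp
  qed
  have label_upper: "\<forall>q. (\<forall>i<N. q i \<le> p) \<longrightarrow> (\<forall>i<N. q i = p \<longrightarrow> label q i = 1)"
    using p unfolding label_def grid_def by auto
  obtain q where q: "\<forall>i<N. q i < p"
    and rs: "\<forall>i<N. \<exists>r s. (\<forall>j<N. q j \<le> r j \<and> r j \<le> q j + 1) \<and> (\<forall>j<N. q j \<le> s j \<and> s j \<le> q j + 1)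
               \<and> label r i \<noteq> label s i"
    by (rule kuhn_lemma[OF p label_bin label_lower label_upper])
  define adjacent where "adjacent r \<longleftrightarrow> (\<forall>j<N. q j \<le> r j \<and> r j \<le> q j + 1)" for r
  obtain r s where rs: "\<And>i. i < N \<Longrightarrow> adjacent (r i) \<and> adjacent (s i) \<and> label (r i) i \<noteq> label (s i) i"
    using rs unfolding adjacent_def by metis
  have adjacent_le: "\<forall>j<N. r j \<le> p" if "adjacent r" for r
  proof (intro allI impI)
    fix j assume "j < N"
    then have "r j \<le> q j + 1" "q j < p" using that q unfolding adjacent_def by auto
    then show "r j \<le> p" by linarith
  qed
  have adjacent_near: "\<bar>grid r j - grid q j\<bar> \<le> 1 / real p" if "adjacent r" for r j
  proof (cases "j < N")
    case True
    then have "\<bar>real (r j) - real (q j)\<bar> \<le> 1" using that unfolding adjacent_def by auto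
    then show ?thesis
      using True p unfolding grid_def by (simp add: divide_right_mono flip: diff_divide_distrib)
  qed (simp add: grid_def)
  define u where "u i = (if label (r i) i = 0 then grid (r i) else grid (s i))" for i
  define v where "v i = (if label (r i) i = 0 then grid (s i) else grid (r i))" for i
  show ?thesis
  proof (rule that)
    show "grid q \<in> ?C" using q grid_in by (simp add: less_imp_le)
    fix i assume i: "i < N"
    then have r: "adjacent (r i)" and s: "adjacent (s i)" and lab: "label (r i) i \<noteq> label (s i) i"
      using rs by auto
    have "label (s i) i = 0" if "label (r i) i \<noteq> 0"
      using that lab by (simp add: label_def split: if_splits)
    then have "u i i \<le> F (u i) i \<and> F (v i) i \<le> v i i"
      using label_0 label_1[OF _ i adjacent_le[OF r]] label_1[OF _ i adjacent_le[OF s]] lab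
      unfolding u_def v_def by auto
    moreover have "u i \<in> ?C \<and> v i \<in> ?C"
      using grid_in[OF adjacent_le[OF r]] grid_in[OF adjacent_le[OF s]] unfolding u_def v_def by simp
    moreover have "(\<forall>j. \<bar>u i j - grid q j\<bar> \<le> 1 / real p) \<and> (\<forall>j. \<bar>v i j - grid q j\<bar> \<le> 1 / real p)"
      using adjacent_near[OF r] adjacent_near[OF s] unfolding u_def v_def by simp
    ultimately show "u i \<in> ?C \<and> v i \<in> ?C \<and>
           (\<forall>j. \<bar>u i j - grid q j\<bar> \<le> 1 / real p) \<and> (\<forall>j. \<bar>v i j - grid q j\<bar> \<le> 1 / real p) \<and>
           u i i \<le> F (u i) i \<and> F (v i) i \<le> v i i" by blast
  qed
qed

lemma tendsto_fun_if_uniformly_close: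
  fixes x u :: "nat \<Rightarrow> 'a \<Rightarrow> real"
  assumes "x \<longlonglongrightarrow> a" and close: "\<And>n j. \<bar>u n j - x n j\<bar> \<le> d n" and "d \<longlonglongrightarrow> 0"
  shows "u \<longlonglongrightarrow> a"
  unfolding tendsto_fun_iff_componentwise
proof
  fix j
  have "(\<lambda>n. u n j - x n j) \<longlonglongrightarrow> 0"
    by (rule Lim_null_comparison[OF _ \<open>d \<longlonglongrightarrow> 0\<close>]) (simp add: close)
  moreover have "(\<lambda>n. x n j) \<longlonglongrightarrow> a j"
    using \<open>x \<longlonglongrightarrow> a\<close> unfolding tendsto_fun_iff_componentwise by blast
  ultimately show "(\<lambda>n. u n j) \<longlonglongrightarrow> a j"
    using tendsto_add by fastforce
qed

lemma brouwer_unit_cube_nat: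
  fixes F :: "(nat \<Rightarrow> real) \<Rightarrow> nat \<Rightarrow> real"
  assumes cont: "continuous_on (unit_cube {..<N}) F" and into: "F \<in> unit_cube {..<N} \<rightarrow> unit_cube {..<N}"
  obtains a where "a \<in> unit_cube {..<N}" and "F a = a"
proof -
  let ?C = "unit_cube {..<N}"
  let ?d = "\<lambda>n. 1 / real (Suc n)"
  define approx where "approx n x u v \<longleftrightarrow> x \<in> ?C \<and> (\<forall>i<N. u i \<in> ?C \<and> v i \<in> ?C \<and>
           (\<forall>j. \<bar>u i j - x j\<bar> \<le> ?d n) \<and> (\<forall>j. \<bar>v i j - x j\<bar> \<le> ?d n) \<and>
           u i i \<le> F (u i) i \<and> F (v i) i \<le> v i i)" for n x u v
  have "\<exists>x u v. approx n x u v" for n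
    using kuhn_approximate_fixed_point[OF into zero_less_Suc, of n] unfolding approx_def by metis
  then obtain x u v where "\<And>n. approx n (x n) (u n) (v n)"
    by metis
  then have x: "\<And>n. x n \<in> ?C"
    and uv: "\<And>n i. i < N \<Longrightarrow> u n i \<in> ?C \<and> v n i \<in> ?C \<and>
               (\<forall>j. \<bar>u n i j - x n j\<bar> \<le> ?d n) \<and> (\<forall>j. \<bar>v n i j - x n j\<bar> \<le> ?d n) \<and>
               u n i i \<le> F (u n i) i \<and> F (v n i) i \<le> v n i i"
    unfolding approx_def by auto
  obtain a r where a: "a \<in> ?C" and r: "strict_mono r" and lim: "(x \<circ> r) \<longlonglongrightarrow> a"
    using compact_imp_seq_compact[OF compact_unit_cube] x unfolding seq_compact_def by metis
  have d: "(\<lambda>k. ?d (r k)) \<longlonglongrightarrow> 0"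
    using LIMSEQ_subseq_LIMSEQ[OF LIMSEQ_inverse_real_of_nat r] by (simp add: o_def inverse_eq_divide)
  have coordinate_limits: "(\<lambda>k. w k i) \<longlonglongrightarrow> a i" "(\<lambda>k. F (w k) i) \<longlonglongrightarrow> F a i"
    if "\<And>k. w k \<in> ?C" "\<And>k j. \<bar>w k j - x (r k) j\<bar> \<le> ?d (r k)" for w i
  proof -
    have "w \<longlonglongrightarrow> a"
      by (rule tendsto_fun_if_uniformly_close[OF _ that(2) d]) (use lim in \<open>simp add: o_def\<close>)
    moreover have "(\<lambda>k. F (w k)) \<longlonglongrightarrow> F a"
      by (rule continuous_on_tendsto_compose[OF cont \<open>w \<longlonglongrightarrow> a\<close> a]) (simp add: that(1))
    ultimately show "(\<lambda>k. w k i) \<longlonglongrightarrow> a i" "(\<lambda>k. F (w k) i) \<longlonglongrightarrow> F a i"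
      unfolding tendsto_fun_iff_componentwise by blast+
  qed
  have "F a i = a i" for i
  proof (cases "i < N")
    case True
    note uvi = uv[OF True]
    have "a i \<le> F a i"
      by (rule LIMSEQ_le[OF coordinate_limits[of "\<lambda>k. u (r k) i"]]) (use uvi in auto)
    moreover have "F a i \<le> a i"
      by (rule LIMSEQ_le[OF coordinate_limits(2,1)[of "\<lambda>k. v (r k) i"]]) (use uvi in auto)
    ultimately show ?thesis by simp
  next
    case False
    have "F a \<in> ?C" using into a by (rule funcset_mem)
    then show ?thesis using a False unfolding unit_cube_def by simp
  qed
  then show ?thesis using that a by blast
qed

lemma brouwer_unit_cube:
  fixes F :: "('a \<Rightarrow> real) \<Rightarrow> 'a \<Rightarrow> real"
  assumes "finite I" and cont: "continuous_on (unit_cube I) F" and into: "F \<in> unit_cube I \<rightarrow> unit_cube I"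
  obtains a where "a \<in> unit_cube I" and "F a = a"
proof -
  define N where "N = card I"
  obtain e where e: "bij_betw e {..<N} I"
    using ex_bij_betw_nat_finite[OF \<open>finite I\<close>] unfolding N_def atLeast0LessThan by blast
  define e' where "e' = the_inv_into {..<N} e"
  have e': "e' a < N" "e (e' a) = a" if "a \<in> I" for a
    using that e unfolding e'_def bij_betw_def
    by (auto simp: the_inv_into_f_f)
  have e_in: "e n \<in> I" if "n < N" for n
    using e that by (auto simp: bij_betw_def)
  define to_nat_cube where "to_nat_cube x = (\<lambda>n. if n < N then x (e n) else 0)" for x :: "'a \<Rightarrow> real"
  define from_nat_cube where "from_nat_cube y = (\<lambda>a. if a \<in> I then y (e' a) else 0)" for y :: "nat \<Rightarrow> real"
  show ?thesis
  proof (rule invertible_fixpoint_property[of "unit_cube I" to_nat_cube "unit_cube {..<N}" from_nat_cube])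
    show "continuous_on (unit_cube I) to_nat_cube"
      unfolding to_nat_cube_def
      by (intro continuous_on_coordinatewise_then_product continuous_intros)
    show "continuous_on (unit_cube {..<N}) from_nat_cube"
      unfolding from_nat_cube_def
      by (intro continuous_on_coordinatewise_then_product continuous_intros)
    show "to_nat_cube \<in> unit_cube I \<rightarrow> unit_cube {..<N}"
      using e_in unfolding to_nat_cube_def unit_cube_def by auto
    show "from_nat_cube \<in> unit_cube {..<N} \<rightarrow> unit_cube I"
      using e' unfolding from_nat_cube_def unit_cube_def by auto
    show "from_nat_cube (to_nat_cube x) = x" if "x \<in> unit_cube I" for x
      using that e' unfolding from_nat_cube_def to_nat_cube_def unit_cube_def by auto
    show "\<exists>y\<in>unit_cube {..<N}. G y = y"
      if "continuous_on (unit_cube {..<N}) G" "G \<in> unit_cube {..<N} \<rightarrow> unit_cube {..<N}" for G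
      using brouwer_unit_cube_nat[OF that] by blast
  qed (use cont into that in auto)
qed

section \<open>Policies and flows\<close>

lemma continuous_on_policy_entry [continuous_intros]:
  "continuous_on S (\<lambda>\<pi> :: ('z,'l) policy. \<pi> t k b a)"
proof -
  have "continuous_on S (\<lambda>\<pi> :: ('z,'l) policy. \<pi> t)"
    by (rule continuous_on_product_then_coordinatewise[OF continuous_on_id])
  then have "continuous_on S (\<lambda>\<pi> :: ('z,'l) policy. \<pi> t k)"
    by (rule continuous_on_product_then_coordinatewise)
  then have "continuous_on S (\<lambda>\<pi> :: ('z,'l) policy. \<pi> t k b)"
    by (rule continuous_on_product_then_coordinatewise)
  then show ?thesis
    by (rule continuous_on_product_then_coordinatewise)
qed

lemma continuous_on_policyI:
  assumes "\<And>t k b a. continuous_on S (\<lambda>x. P x t k b a)"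
  shows "continuous_on S (P :: 'a::topological_space \<Rightarrow> ('z,'l) policy)"
  using assms by (intro continuous_on_coordinatewise_then_product)

definition nonneg_flow :: "(nat \<Rightarrow> 'a \<Rightarrow> nat \<Rightarrow> real) \<Rightarrow> bool" where
  "nonneg_flow f \<longleftrightarrow> (\<forall>t k b. 0 \<le> f t k b)"

definition nonneg_flows :: "('z,'l) xflow \<times> 'z yflow \<times> 'l zflow \<Rightarrow> bool" where
  "nonneg_flows s \<longleftrightarrow> nonneg_flow (fst s) \<and> nonneg_flow (fst (snd s)) \<and> nonneg_flow (snd (snd s))"

definition continuous_flow_on :: "'p::topological_space set \<Rightarrow> ('p \<Rightarrow> nat \<Rightarrow> 'a \<Rightarrow> nat \<Rightarrow> real) \<Rightarrow> bool" where
  "continuous_flow_on S F \<longleftrightarrow> (\<forall>t k b. continuous_on S (\<lambda>p. F p t k b))"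

definition continuous_flows_on :: "'p::topological_space set \<Rightarrow> ('p \<Rightarrow> ('z,'l) xflow \<times> 'z yflow \<times> 'l zflow) \<Rightarrow> bool" where
  "continuous_flows_on S F \<longleftrightarrow> continuous_flow_on S (\<lambda>p. fst (F p)) \<and>
     continuous_flow_on S (\<lambda>p. fst (snd (F p))) \<and> continuous_flow_on S (\<lambda>p. snd (snd (F p)))"

lemma continuous_flow_on_fun_upd:
  assumes "continuous_flow_on S F" "\<And>k b. continuous_on S (\<lambda>p. G p k b)"
  shows "continuous_flow_on S (\<lambda>p. (F p)(t := G p))"
  unfolding continuous_flow_on_def
proof (intro allI)
  fix t' k b
  show "continuous_on S (\<lambda>p. ((F p)(t := G p)) t' k b)"
    using assms unfolding continuous_flow_on_def by (cases "t' = t") auto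
qed

(* At a fixed point pi a * G = max 0 (Q a - V), with G the total gain.  If G > 0, every action
   with pi a > 0 has Q a > V, contradicting sum_a pi a * (Q a - V) = 0. *)
lemma nash_map_fixed_point_imp_no_gain:
  fixes \<pi> Q :: "'a \<Rightarrow> real"
  assumes A: "finite A" and nonneg: "\<forall>a\<in>A. 0 \<le> \<pi> a" and sum1: "sum \<pi> A = 1"
    and V: "V = (\<Sum>a\<in>A. \<pi> a * Q a)"
    and fixed: "\<forall>a\<in>A. \<pi> a = (\<pi> a + max 0 (Q a - V)) / (1 + (\<Sum>a'\<in>A. max 0 (Q a' - V)))"
  shows "\<forall>a\<in>A. Q a \<le> V"
proof -
  define G where "G = (\<Sum>a\<in>A. max 0 (Q a - V))"
  have "0 \<le> G" unfolding G_def by (intro sum_nonneg) auto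
  have gain: "\<pi> a * G = max 0 (Q a - V)" if "a \<in> A" for a
  proof -
    have "\<pi> a * (1 + G) = \<pi> a + max 0 (Q a - V)"
      using fixed that \<open>0 \<le> G\<close> unfolding G_def by (simp add: eq_divide_eq)
    then show ?thesis by (simp add: algebra_simps)
  qed
  show ?thesis
  proof (cases "G = 0")
    case True
    then show ?thesis using gain by fastforce
  next
    case False
    with \<open>0 \<le> G\<close> have "0 < G" by simp
    have "\<pi> a * (Q a - V) = \<pi> a * G * \<pi> a" if "a \<in> A" for a
      using gain[OF that] \<open>0 < G\<close> nonneg that
      by (cases "\<pi> a = 0") (auto simp: max_def zero_less_mult_iff split: if_splits)
    then have "(\<Sum>a\<in>A. \<pi> a * (Q a - V)) = (\<Sum>a\<in>A. G * \<pi> a ^ 2)"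
      by (intro sum.cong) (simp_all add: power2_eq_square mult_ac)
    then have "(\<Sum>a\<in>A. \<pi> a * (Q a - V)) = G * (\<Sum>a\<in>A. \<pi> a ^ 2)"
      by (simp add: sum_distrib_left)
    moreover have "(\<Sum>a\<in>A. \<pi> a * (Q a - V)) = 0"
      using V sum1 by (simp add: right_diff_distrib sum_subtractf flip: sum_distrib_right)
    moreover have "0 < (\<Sum>a\<in>A. \<pi> a ^ 2)"
    proof -
      obtain a where "a \<in> A" "\<pi> a \<noteq> 0" using sum1 by (metis sum.neutral zero_neq_one)
      then show ?thesis using A by (intro sum_pos2) auto
    qed
    ultimately show ?thesis using \<open>0 < G\<close> by simp
  qed
qed

locale eriver_regular =
  fixes E :: "('z::finite, 'l::finite, 'th) eriver"
  assumes fleet_pos: "0 < fleet E"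
    and tl_pos: "\<forall>i l. 0 < tl E i l"
    and nbr_refl: "\<forall>i. i \<in> nbr E i"
    and bdry_ne: "\<forall>l. bdry E l \<noteq> {}"
    and dem_nonneg: "\<forall>t i. 0 \<le> dem E t i"
    and alpha_nonneg: "\<forall>t i j. 0 \<le> alpha E t i j"
    and f_range: "\<forall>q y th. 0 \<le> q \<longrightarrow> 0 \<le> y \<longrightarrow> 0 \<le> fmeet E q y th \<and> fmeet E q y th \<le> 1"
    and g_range: "\<forall>t h \<omega>. h \<in> hist_dom E t \<longrightarrow> 0 \<le> gwait E t h \<omega> \<and> gwait E t h \<omega> \<le> 1"
    and g_pmf: "\<forall>t h. h \<in> hist_dom E t \<longrightarrow> (\<lambda>\<omega>. gwait E t h \<omega>) sums 1"
    and rho_nonneg: "\<forall>k b. 0 \<le> rho E k b"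
    and f_cont: "\<forall>q th. 0 \<le> q \<longrightarrow> continuous_on {0..} (\<lambda>y. fmeet E q y th)"
    and g_cont: "\<forall>t \<omega>. continuous_on (hist_dom E t) (\<lambda>h. gwait E t h \<omega>)"
begin

lemma meet_range:
  assumes "nonneg_flow y"
  shows "0 \<le> meet E y t i" "meet E y t i \<le> 1"
proof -
  have "0 \<le> (\<Sum>b\<in>{1..Bmax E}. y t i b)"
    using assms unfolding nonneg_flow_def by (simp add: sum_nonneg)
  then show "0 \<le> meet E y t i" "meet E y t i \<le> 1"
    using f_range dem_nonneg unfolding meet_def by auto
qed

lemma zhist_in_hist_dom: "nonneg_flow z \<Longrightarrow> zhist E z t l \<in> hist_dom E t"
  unfolding nonneg_flow_def zhist_def hist_dom_def by auto

lemma waitp_nonneg: "nonneg_flow z \<Longrightarrow> 0 \<le> waitp E z t l \<omega>"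
  using g_range zhist_in_hist_dom unfolding waitp_def by blast

lemma waitp_sums: "nonneg_flow z \<Longrightarrow> (\<lambda>\<omega>. waitp E z t l \<omega>) sums 1"
  using g_pmf zhist_in_hist_dom unfolding waitp_def by blast

lemma Omega_nonneg: "\<pi> \<in> Omega E \<Longrightarrow> 0 \<le> \<pi> t k b a"
  unfolding Omega_def by blast

lemma Omega_sum: "\<pi> \<in> Omega E \<Longrightarrow> (\<Sum>a\<in>feasible E k. \<pi> t k b a) = 1"
  unfolding Omega_def by blast

lemma Omega_infeasible: "\<pi> \<in> Omega E \<Longrightarrow> a \<notin> feasible E k \<Longrightarrow> \<pi> t k b a = 0"
  unfolding Omega_def by blast

lemma finite_feasible: "finite (feasible E k)"
  by simp

lemma feasible_nonempty: "feasible E k \<noteq> {}"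
  using nbr_refl bdry_ne unfolding feasible_def by (cases k) auto

lemma Omega_le_1: "\<pi> \<in> Omega E \<Longrightarrow> \<pi> t k b a \<le> 1"
proof (cases "a \<in> feasible E k")
  case True
  assume \<pi>: "\<pi> \<in> Omega E"
  have "\<pi> t k b a \<le> (\<Sum>a\<in>feasible E k. \<pi> t k b a)"
    by (rule member_le_sum[OF True]) (simp_all add: Omega_nonneg[OF \<pi>])
  then show ?thesis using Omega_sum[OF \<pi>] by simp
qed (simp add: Omega_infeasible)

section \<open>Continuity of the flow map\<close>

lemma znew_nonneg: "\<pi> \<in> Omega E \<Longrightarrow> nonneg_flow x \<Longrightarrow> 0 \<le> znew E \<pi> x t l b"
  unfolding znew_def nonneg_flow_def by (auto intro!: sum_nonneg simp: Omega_nonneg)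

lemma ynew_nonneg: "\<pi> \<in> Omega E \<Longrightarrow> nonneg_flow x \<Longrightarrow> 0 \<le> ynew E \<pi> x t i b"
  unfolding ynew_def nonneg_flow_def by (auto intro!: sum_nonneg add_nonneg_nonneg simp: Omega_nonneg)

lemma xnew_nonneg:
  assumes y: "nonneg_flow y" and z: "nonneg_flow z"
  shows "0 \<le> xnew E y z t k b"
proof -
  note m = meet_range[OF y] and w = waitp_nonneg[OF z]
  have "0 \<le> y t' i b'" "0 \<le> z t' l b'" for t' i b' l
    using y z unfolding nonneg_flow_def by auto
  then show ?thesis
    unfolding xnew_def using fleet_pos rho_nonneg alpha_nonneg m w
    by (auto split: loc.split intro!: sum_nonneg add_nonneg_nonneg mult_nonneg_nonneg)
qed

lemma upd_eq:
  "upd E \<pi> (x, y, z) t =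
     (let z' = z(t := znew E \<pi> x t); x' = x(t := xnew E y z' t) in (x', y(t := ynew E \<pi> x' t), z'))"
  unfolding upd_def Let_def by simp

lemma nonneg_flows_upd:
  assumes \<pi>: "\<pi> \<in> Omega E" and s: "nonneg_flows s"
  shows "nonneg_flows (upd E \<pi> s t)"
proof -
  obtain x y z where xyz: "s = (x, y, z)" by (cases s)
  define z' where "z' = z(t := znew E \<pi> x t)"
  define x' where "x' = x(t := xnew E y z' t)"
  have "nonneg_flow z'"
    using s znew_nonneg[OF \<pi>] unfolding xyz z'_def nonneg_flows_def nonneg_flow_def by simp
  moreover have "nonneg_flow x'"
    using s xnew_nonneg \<open>nonneg_flow z'\<close> unfolding xyz x'_def nonneg_flows_def nonneg_flow_def by simp
  moreover have "nonneg_flow (y(t := ynew E \<pi> x' t))"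
    using s ynew_nonneg[OF \<pi> \<open>nonneg_flow x'\<close>] unfolding xyz nonneg_flows_def nonneg_flow_def by simp
  ultimately show ?thesis
    unfolding xyz upd_eq Let_def z'_def[symmetric] x'_def[symmetric] nonneg_flows_def by simp
qed

lemma nonneg_flows_upto:
  assumes "\<pi> \<in> Omega E"
  shows "nonneg_flows (flows_upto E \<pi> n)"
proof (induction n)
  case 0
  have "nonneg_flows (\<lambda>_ _ _. 0, \<lambda>_ _ _. 0, \<lambda>_ _ _. 0)"
    by (simp add: nonneg_flows_def nonneg_flow_def)
  then show ?case using nonneg_flows_upd[OF assms] by simp
next
  case (Suc n)
  then show ?case using nonneg_flows_upd[OF assms] by simp
qed

lemma nonneg_mu:
  assumes "\<pi> \<in> Omega E"
  shows "nonneg_flow (fst (mu E \<pi>))" "nonneg_flow (snd (mu E \<pi>))"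
  using nonneg_flows_upto[OF assms] unfolding mu_def nonneg_flows_def nonneg_flow_def by auto

lemma continuous_on_meet:
  assumes "continuous_flow_on S Y" "\<forall>p\<in>S. nonneg_flow (Y p)"
  shows "continuous_on S (\<lambda>p. meet E (Y p) t i)"
proof -
  have "continuous_on {0..} (\<lambda>y. fmeet E (dem E t i) y (theta E t i))"
    using f_cont dem_nonneg by auto
  moreover have "continuous_on S (\<lambda>p. \<Sum>b\<in>{1..Bmax E}. Y p t i b)"
    using assms(1) unfolding continuous_flow_on_def by (intro continuous_intros) auto
  moreover have "(\<lambda>p. \<Sum>b\<in>{1..Bmax E}. Y p t i b) ` S \<subseteq> {0..}"
    using assms(2) unfolding nonneg_flow_def by (auto intro!: sum_nonneg)
  ultimately show ?thesis
    unfolding meet_def by (rule continuous_on_compose2)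
qed

lemma continuous_on_waitp:
  assumes "continuous_flow_on S Z" "\<forall>p\<in>S. nonneg_flow (Z p)"
  shows "continuous_on S (\<lambda>p. waitp E (Z p) t l \<omega>)"
proof -
  have "continuous_on S (\<lambda>p. zhist E (Z p) t l)"
    using assms(1) unfolding zhist_def continuous_flow_on_def
    by (intro continuous_on_coordinatewise_then_product continuous_intros) auto
  moreover have "(\<lambda>p. zhist E (Z p) t l) ` S \<subseteq> hist_dom E t"
    using assms(2) zhist_in_hist_dom by blast
  ultimately show ?thesis
    unfolding waitp_def using g_cont continuous_on_compose2 by blast
qed

lemma continuous_on_znew:
  "continuous_flow_on S X \<Longrightarrow> continuous_on S (\<lambda>\<pi>. znew E \<pi> (X \<pi>) t l b)"
  unfolding znew_def continuous_flow_on_def by (intro continuous_intros) auto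

lemma continuous_on_ynew:
  "continuous_flow_on S X \<Longrightarrow> continuous_on S (\<lambda>\<pi>. ynew E \<pi> (X \<pi>) t i b)"
  unfolding ynew_def continuous_flow_on_def by (intro continuous_intros) auto

lemma continuous_on_xnew:
  assumes "continuous_flow_on S Y" "\<forall>p\<in>S. nonneg_flow (Y p)"
    and "continuous_flow_on S Z" "\<forall>p\<in>S. nonneg_flow (Z p)"
  shows "continuous_on S (\<lambda>p. xnew E (Y p) (Z p) t k b)"
  using assms(1,3) continuous_on_meet[OF assms(1,2)] continuous_on_waitp[OF assms(3,4)]
  unfolding xnew_def continuous_flow_on_def
  by (cases k) (simp_all only: loc.case; intro continuous_intros; simp)+

lemma continuous_flows_on_upd:
  assumes cont: "continuous_flows_on S F" and nonneg: "\<forall>\<pi>\<in>S. nonneg_flows (F \<pi>)"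
    and S: "S \<subseteq> Omega E"
  shows "continuous_flows_on S (\<lambda>\<pi>. upd E \<pi> (F \<pi>) t)"
proof -
  define X where "X \<pi> = fst (F \<pi>)" for \<pi>
  define Y where "Y \<pi> = fst (snd (F \<pi>))" for \<pi>
  define Z where "Z \<pi> = snd (snd (F \<pi>))" for \<pi>
  define Z' where "Z' \<pi> = (Z \<pi>)(t := znew E \<pi> (X \<pi>) t)" for \<pi>
  define X' where "X' \<pi> = (X \<pi>)(t := xnew E (Y \<pi>) (Z' \<pi>) t)" for \<pi>
  have upd: "upd E \<pi> (F \<pi>) t = (X' \<pi>, (Y \<pi>)(t := ynew E \<pi> (X' \<pi>) t), Z' \<pi>)" for \<pi>
    using upd_eq[of \<pi> "X \<pi>" "Y \<pi>" "Z \<pi>" t] unfolding X_def Y_def Z_def X'_def Z'_def Let_def by simp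
  have X: "continuous_flow_on S X" and Y: "continuous_flow_on S Y" and Z: "continuous_flow_on S Z"
    using cont unfolding continuous_flows_on_def X_def Y_def Z_def by auto
  have Y0: "\<forall>\<pi>\<in>S. nonneg_flow (Y \<pi>)"
    using nonneg unfolding nonneg_flows_def Y_def by blast
  have Z': "continuous_flow_on S Z'"
    unfolding Z'_def by (rule continuous_flow_on_fun_upd[OF Z continuous_on_znew[OF X]])
  have Z'0: "\<forall>\<pi>\<in>S. nonneg_flow (Z' \<pi>)"
    using nonneg znew_nonneg S unfolding Z'_def X_def Z_def nonneg_flows_def nonneg_flow_def by auto
  have X': "continuous_flow_on S X'"
    unfolding X'_def by (rule continuous_flow_on_fun_upd[OF X continuous_on_xnew[OF Y Y0 Z' Z'0]])
  have "continuous_flow_on S (\<lambda>\<pi>. (Y \<pi>)(t := ynew E \<pi> (X' \<pi>) t))"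
    by (rule continuous_flow_on_fun_upd[OF Y continuous_on_ynew[OF X']])
  then show ?thesis
    unfolding continuous_flows_on_def upd using X' Z' by simp
qed

lemma continuous_flows_on_flows_upto:
  "continuous_flows_on (Omega E) (\<lambda>\<pi>. flows_upto E \<pi> n)"
proof (induction n)
  case 0
  have "continuous_flows_on (Omega E) (\<lambda>_. (\<lambda>_ _ _. 0, \<lambda>_ _ _. 0, \<lambda>_ _ _. 0))"
    by (simp add: continuous_flows_on_def continuous_flow_on_def)
  moreover have "\<forall>\<pi>\<in>Omega E. nonneg_flows (\<lambda>_ _ _. 0, \<lambda>_ _ _. 0, \<lambda>_ _ _. 0)"
    by (simp add: nonneg_flows_def nonneg_flow_def)
  ultimately show ?case
    unfolding flows_upto.simps by (rule continuous_flows_on_upd) simp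
next
  case (Suc n)
  then show ?case
    unfolding flows_upto.simps by (rule continuous_flows_on_upd) (simp_all add: nonneg_flows_upto)
qed

lemma continuous_mu:
  "continuous_flow_on (Omega E) (\<lambda>\<pi>. fst (mu E \<pi>))" "continuous_flow_on (Omega E) (\<lambda>\<pi>. snd (mu E \<pi>))"
  using continuous_flows_on_flows_upto
  unfolding mu_def continuous_flows_on_def continuous_flow_on_def by auto

section \<open>Values\<close>

definition vanishes_from_horizon :: "(nat \<Rightarrow> ('z,'l) loc \<Rightarrow> nat \<Rightarrow> real) \<Rightarrow> bool" where
  "vanishes_from_horizon W \<longleftrightarrow> (\<forall>t k b. horizon E \<le> t \<longrightarrow> W t k b = 0)"

lemma expected_charging_value_finite:
  assumes "vanishes_from_horizon W" "nonneg_flow z"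
  shows "(\<Sum>\<omega>. waitp E z T l \<omega> * (C + W (T + \<omega> + c) (Stn l) (Bmax E)))
         = C + (\<Sum>\<omega><horizon E. waitp E z T l \<omega> * W (T + \<omega> + c) (Stn l) (Bmax E))"
proof -
  have "(\<lambda>\<omega>. waitp E z T l \<omega> * C) sums C"
    using sums_mult2[OF waitp_sums[OF assms(2)], where c = C] by simp
  moreover have "(\<lambda>\<omega>. waitp E z T l \<omega> * W (T + \<omega> + c) (Stn l) (Bmax E)) sums
             (\<Sum>\<omega><horizon E. waitp E z T l \<omega> * W (T + \<omega> + c) (Stn l) (Bmax E))"
    by (rule sums_finite) (use assms(1) in \<open>auto simp: vanishes_from_horizon_def\<close>)
  ultimately show ?thesis
    by (simp add: distrib_left sums_unique[symmetric] sums_add)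
qed

lemma Qval_cong_future:
  assumes "\<And>t' k b. t < t' \<Longrightarrow> W t' k b = W' t' k b"
  shows "Qval E W y z t k b a = Qval E W' y z t k b a"
proof -
  have "t < t + tl E i l + \<omega> + c" for i l \<omega> c
    using tl_pos by (simp add: add.assoc)
  then show ?thesis
    unfolding Qval_def by (cases k; cases a) (simp_all add: assms cong: if_cong)
qed

lemma Qval_mono:
  assumes b: "b \<le> Bmax E" and W: "vanishes_from_horizon W" "vanishes_from_horizon W'"
    and le: "\<And>t' k b'. t < t' \<Longrightarrow> b' \<le> Bmax E \<Longrightarrow> W t' k b' \<le> W' t' k b'"
    and y: "nonneg_flow y" and z: "nonneg_flow z"
  shows "Qval E W y z t k b a \<le> Qval E W' y z t k b a"
proof -
  note m = meet_range[OF y]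
  have zone: "(1 - meet E y t j) * W (t + 1) (Zone j) (b - 1)
               + (\<Sum>k'\<in>UNIV. meet E y t j * alpha E t j k' *
                    (if tz E j k' + 1 \<le> b
                     then fare E j k' + W (t + 1 + tz E j k') (Zone k') (b - 1 - tz E j k')
                     else kappa E))
             \<le> (1 - meet E y t j) * W' (t + 1) (Zone j) (b - 1)
               + (\<Sum>k'\<in>UNIV. meet E y t j * alpha E t j k' *
                    (if tz E j k' + 1 \<le> b
                     then fare E j k' + W' (t + 1 + tz E j k') (Zone k') (b - 1 - tz E j k')
                     else kappa E))" for j
    using m alpha_nonneg le b
    by (intro add_mono mult_left_mono sum_mono) (auto intro: le simp: mult_nonneg_nonneg)
  have stn: "(\<Sum>\<omega>. waitp E z (t + tl E i l) l \<omega> *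
                 (- cprice E l * real (chtime E (b - tl E i l))
                  + W (t + tl E i l + \<omega> + chtime E (b - tl E i l)) (Stn l) (Bmax E)))
           \<le> (\<Sum>\<omega>. waitp E z (t + tl E i l) l \<omega> *
                 (- cprice E l * real (chtime E (b - tl E i l))
                  + W' (t + tl E i l + \<omega> + chtime E (b - tl E i l)) (Stn l) (Bmax E)))" for i l
  proof -
    have "t < t + tl E i l + \<omega> + c" for \<omega> c
      using tl_pos by (simp add: add.assoc)
    then show ?thesis
      unfolding expected_charging_value_finite[OF W(1) z] expected_charging_value_finite[OF W(2) z]
      by (intro add_left_mono sum_mono mult_left_mono waitp_nonneg[OF z] le) simp_all
  qed
  show ?thesis
    unfolding Qval_def using zone stn by (cases k; cases a) (simp_all split: if_splits)
qed

lemma continuous_on_Qval: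
  assumes W: "\<And>t k b. continuous_on S (\<lambda>p. W p t k b)" "\<forall>p\<in>S. vanishes_from_horizon (W p)"
    and Y: "continuous_flow_on S Y" "\<forall>p\<in>S. nonneg_flow (Y p)"
    and Z: "continuous_flow_on S Z" "\<forall>p\<in>S. nonneg_flow (Z p)"
  shows "continuous_on S (\<lambda>p. Qval E (W p) (Y p) (Z p) t k b a)"
proof -
  note m = continuous_on_meet[OF Y] and w = continuous_on_waitp[OF Z]
  have stn: "continuous_on S (\<lambda>p. \<Sum>\<omega>. waitp E (Z p) T l \<omega> * (C + W p (T + \<omega> + c) (Stn l) (Bmax E)))"
    for T l C c
  proof (rule continuous_on_eq)
    show "continuous_on S (\<lambda>p. C + (\<Sum>\<omega><horizon E. waitp E (Z p) T l \<omega> * W p (T + \<omega> + c) (Stn l) (Bmax E)))"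
      by (intro continuous_intros w W)
  qed (use expected_charging_value_finite W(2) Z(2) in auto)
  show ?thesis
    unfolding Qval_def
    by (cases k; cases a) (simp_all only: loc.case; intro continuous_intros m W stn)+
qed

lemma Wval_vanishes_from_horizon: "vanishes_from_horizon (Wval E d \<pi> y z)"
  unfolding vanishes_from_horizon_def by (cases d) auto

lemma Wval_eq_if_horizon_reached:
  assumes "horizon E \<le> t + d" "horizon E \<le> t + d'"
  shows "Wval E d \<pi> y z t k b = Wval E d' \<pi> y z t k b"
  using assms
proof (induction d arbitrary: d' t k b)
  case 0
  then show ?case using Wval_vanishes_from_horizon unfolding vanishes_from_horizon_def by simp
next
  case (Suc d)
  show ?case
  proof (cases "horizon E \<le> t")
    case True
    then show ?thesis using Wval_vanishes_from_horizon unfolding vanishes_from_horizon_def by metis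
  next
    case False
    then obtain d'' where d': "d' = Suc d''" using Suc.prems by (cases d') auto
    have "Qval E (Wval E d \<pi> y z) y z t k b a = Qval E (Wval E d'' \<pi> y z) y z t k b a" for a
      by (rule Qval_cong_future) (rule Suc.IH, use Suc.prems d' in auto)
    then show ?thesis using False d' by simp
  qed
qed

lemma continuous_on_Wval:
  assumes Y: "continuous_flow_on S Y" "\<forall>p\<in>S. nonneg_flow (Y p)"
    and Z: "continuous_flow_on S Z" "\<forall>p\<in>S. nonneg_flow (Z p)"
  shows "continuous_on S (\<lambda>\<pi>. Wval E d \<pi> (Y \<pi>) (Z \<pi>) t k b)"
proof (induction d arbitrary: t k b)
  case (Suc d)
  have "continuous_on S (\<lambda>\<pi>. Qval E (Wval E d \<pi> (Y \<pi>) (Z \<pi>)) (Y \<pi>) (Z \<pi>) t k b a)" for a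
    by (rule continuous_on_Qval[OF Suc.IH _ Y Z]) (simp add: Wval_vanishes_from_horizon)
  then show ?case
    by (simp only: Wval.simps) (intro continuous_intros)
qed simp

section \<open>Best responses\<close>

definition Q_induced :: "('z,'l) policy \<Rightarrow> nat \<Rightarrow> ('z,'l) loc \<Rightarrow> nat \<Rightarrow> ('z,'l) loc \<Rightarrow> real" where
  "Q_induced \<pi> t k b a =
     Qval E (Wval E (horizon E) \<pi> (fst (mu E \<pi>)) (snd (mu E \<pi>))) (fst (mu E \<pi>)) (snd (mu E \<pi>)) t k b a"

definition V_induced :: "('z,'l) policy \<Rightarrow> nat \<Rightarrow> ('z,'l) loc \<Rightarrow> nat \<Rightarrow> real" where
  "V_induced \<pi> t k b = (\<Sum>a\<in>feasible E k. \<pi> t k b a * Q_induced \<pi> t k b a)"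

lemma V_induced_eq_Wval:
  assumes "t < horizon E" "horizon E \<le> t + d"
  shows "V_induced \<pi> t k b = Wval E d \<pi> (fst (mu E \<pi>)) (snd (mu E \<pi>)) t k b"
proof -
  have "Wval E d \<pi> (fst (mu E \<pi>)) (snd (mu E \<pi>)) t k b
          = Wval E (Suc (horizon E)) \<pi> (fst (mu E \<pi>)) (snd (mu E \<pi>)) t k b"
    by (rule Wval_eq_if_horizon_reached) (use assms in auto)
  then show ?thesis
    using assms unfolding V_induced_def Q_induced_def by simp
qed

lemma Wval_le_if_no_improving_action:
  assumes \<pi>: "\<pi> \<in> Omega E" and \<pi>': "\<pi>' \<in> Omega E"
    and no_gain: "\<And>t k b a. t < horizon E \<Longrightarrow> b \<le> Bmax E \<Longrightarrow> a \<in> feasible E k \<Longrightarrow>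
                    Q_induced \<pi> t k b a \<le> V_induced \<pi> t k b"
    and "b \<le> Bmax E" "horizon E \<le> t + d"
  shows "Wval E d \<pi>' (fst (mu E \<pi>)) (snd (mu E \<pi>)) t k b \<le> Wval E d \<pi> (fst (mu E \<pi>)) (snd (mu E \<pi>)) t k b"
  using assms(4,5)
proof (induction d arbitrary: t k b)
  case (Suc d)
  define y where "y = fst (mu E \<pi>)"
  define z where "z = snd (mu E \<pi>)"
  show ?case
  proof (cases "horizon E \<le> t")
    case False
    have "Qval E (Wval E d \<pi>' y z) y z t k b a \<le> V_induced \<pi> t k b" if a: "a \<in> feasible E k" for a
    proof -
      have "Qval E (Wval E d \<pi>' y z) y z t k b a \<le> Qval E (Wval E d \<pi> y z) y z t k b a"
        using Suc nonneg_mu[OF \<pi>] unfolding y_def z_def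
        by (intro Qval_mono Wval_vanishes_from_horizon) auto
      also have "\<dots> = Q_induced \<pi> t k b a"
        unfolding Q_induced_def y_def z_def
        by (rule Qval_cong_future) (rule Wval_eq_if_horizon_reached, use Suc.prems in auto)
      also have "\<dots> \<le> V_induced \<pi> t k b"
        using False Suc.prems a by (intro no_gain) auto
      finally show ?thesis .
    qed
    then have "Wval E (Suc d) \<pi>' y z t k b \<le> (\<Sum>a\<in>feasible E k. \<pi>' t k b a * V_induced \<pi> t k b)"
      using False by (auto intro!: sum_mono mult_left_mono Omega_nonneg[OF \<pi>'])
    also have "\<dots> = V_induced \<pi> t k b"
      using Omega_sum[OF \<pi>'] by (simp flip: sum_distrib_right)
    also have "\<dots> = Wval E (Suc d) \<pi> y z t k b"
      unfolding y_def z_def using False Suc.prems by (intro V_induced_eq_Wval) auto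
    finally show ?thesis unfolding y_def z_def .
  qed simp
qed simp

lemma is_MFE_if_no_improving_action:
  assumes \<pi>: "\<pi> \<in> Omega E"
    and no_gain: "\<And>t k b a. t < horizon E \<Longrightarrow> b \<le> Bmax E \<Longrightarrow> a \<in> feasible E k \<Longrightarrow>
                    Q_induced \<pi> t k b a \<le> V_induced \<pi> t k b"
  shows "is_MFE E \<pi>"
  unfolding is_MFE_def
proof (intro conjI ballI \<pi>)
  fix \<pi>' assume \<pi>': "\<pi>' \<in> Omega E"
  show "Vrho E \<pi>' (mu E \<pi>) \<le> Vrho E \<pi> (mu E \<pi>)"
    unfolding Vrho_def split_beta
    using Wval_le_if_no_improving_action[OF \<pi> \<pi>' no_gain] rho_nonneg
    by (intro sum_mono mult_left_mono) auto
qed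

definition gain :: "('z,'l) policy \<Rightarrow> nat \<Rightarrow> ('z,'l) loc \<Rightarrow> nat \<Rightarrow> ('z,'l) loc \<Rightarrow> real" where
  "gain \<pi> t k b a = max 0 (Q_induced \<pi> t k b a - V_induced \<pi> t k b)"

definition nash_map :: "('z,'l) policy \<Rightarrow> ('z,'l) policy" where
  "nash_map \<pi> t k b a =
     (if a \<in> feasible E k then (\<pi> t k b a + gain \<pi> t k b a) / (1 + (\<Sum>a'\<in>feasible E k. gain \<pi> t k b a'))
      else 0)"

lemma nash_map_in_Omega:
  assumes \<pi>: "\<pi> \<in> Omega E"
  shows "nash_map \<pi> \<in> Omega E"
proof -
  have G: "0 \<le> (\<Sum>a'\<in>feasible E k. gain \<pi> t k b a')" for t k b
    unfolding gain_def by (intro sum_nonneg) simp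
  have "(\<Sum>a\<in>feasible E k. nash_map \<pi> t k b a) = 1" for t k b
  proof -
    have "(\<Sum>a\<in>feasible E k. \<pi> t k b a + gain \<pi> t k b a) = 1 + (\<Sum>a\<in>feasible E k. gain \<pi> t k b a)"
      by (simp add: sum.distrib Omega_sum[OF \<pi>])
    then show ?thesis
      using G[of t k b] unfolding nash_map_def by (simp add: sum_divide_distrib[symmetric])
  qed
  moreover have "0 \<le> nash_map \<pi> t k b a" for t k b a
    using G[of t k b] Omega_nonneg[OF \<pi>] unfolding nash_map_def gain_def by simp
  ultimately show ?thesis
    unfolding Omega_def nash_map_def by auto
qed

lemma continuous_on_Q_induced: "continuous_on (Omega E) (\<lambda>\<pi>. Q_induced \<pi> t k b a)"
  unfolding Q_induced_def
  using continuous_mu nonneg_mu Wval_vanishes_from_horizon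
  by (intro continuous_on_Qval continuous_on_Wval) auto

lemma continuous_on_nash_map: "continuous_on (Omega E) (\<lambda>\<pi>. nash_map \<pi> t k b a)"
proof -
  have "1 + (\<Sum>a'\<in>feasible E k. gain \<pi> t k b a') \<noteq> 0" for \<pi>
    using sum_nonneg[of "feasible E k" "gain \<pi> t k b"] unfolding gain_def by fastforce
  then show ?thesis
    unfolding nash_map_def gain_def V_induced_def
    by (intro continuous_intros continuous_on_Q_induced) auto
qed

lemma nash_map_fixed_point_imp_no_improving_action:
  assumes \<pi>: "\<pi> \<in> Omega E" and fixed: "\<And>a. a \<in> feasible E k \<Longrightarrow> nash_map \<pi> t k b a = \<pi> t k b a"
    and a: "a \<in> feasible E k"
  shows "Q_induced \<pi> t k b a \<le> V_induced \<pi> t k b"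
proof -
  have "\<forall>a\<in>feasible E k. Q_induced \<pi> t k b a \<le> V_induced \<pi> t k b"
  proof (rule nash_map_fixed_point_imp_no_gain[OF finite_feasible])
    show "\<forall>a\<in>feasible E k. 0 \<le> \<pi> t k b a" "sum (\<pi> t k b) (feasible E k) = 1"
      using Omega_nonneg[OF \<pi>] Omega_sum[OF \<pi>] by auto
    show "V_induced \<pi> t k b = (\<Sum>a\<in>feasible E k. \<pi> t k b a * Q_induced \<pi> t k b a)"
      unfolding V_induced_def ..
    show "\<forall>a\<in>feasible E k. \<pi> t k b a = (\<pi> t k b a + max 0 (Q_induced \<pi> t k b a - V_induced \<pi> t k b)) /
            (1 + (\<Sum>a'\<in>feasible E k. max 0 (Q_induced \<pi> t k b a' - V_induced \<pi> t k b)))"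
      using fixed unfolding nash_map_def gain_def by simp
  qed
  with a show ?thesis by blast
qed

section \<open>Existence of an equilibrium\<close>

definition decision_points :: "(nat \<times> ('z,'l) loc \<times> nat \<times> ('z,'l) loc) set" where
  "decision_points = {(t, k, b, a). t < horizon E \<and> b \<le> Bmax E \<and> a \<in> feasible E k}"

lemma finite_decision_points: "finite decision_points"
proof (rule finite_subset)
  show "decision_points \<subseteq> {..<horizon E} \<times> UNIV \<times> {..Bmax E} \<times> UNIV"
    unfolding decision_points_def by auto
qed simp

definition mass :: "(nat \<times> ('z,'l) loc \<times> nat \<times> ('z,'l) loc \<Rightarrow> real) \<Rightarrow> nat \<Rightarrow> ('z,'l) loc \<Rightarrow> nat \<Rightarrow> real" where
  "mass x t k b = (\<Sum>a\<in>feasible E k. x (t, k, b, a))"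

(* A continuous retraction of the cube onto the policies: policy_of x coincides with x at
   every state where x already sums to 1, and is uniform where x vanishes. *)
definition policy_of :: "(nat \<times> ('z,'l) loc \<times> nat \<times> ('z,'l) loc \<Rightarrow> real) \<Rightarrow> ('z,'l) policy" where
  "policy_of x t k b a =
     (if a \<in> feasible E k
      then x (t, k, b, a) / max 1 (mass x t k b) + max 0 (1 - mass x t k b) / real (card (feasible E k))
      else 0)"

lemma policy_of_in_Omega:
  assumes x: "x \<in> unit_cube decision_points"
  shows "policy_of x \<in> Omega E"
proof -
  have card: "0 < real (card (feasible E k))" for k
    using feasible_nonempty by (simp add: card_gt_0_iff)
  have "(\<Sum>a\<in>feasible E k. policy_of x t k b a) = 1" for t k b
  proof -
    have "(\<Sum>a\<in>feasible E k. policy_of x t k b a)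
            = mass x t k b / max 1 (mass x t k b) + max 0 (1 - mass x t k b)"
      using card[of k] feasible_nonempty unfolding policy_of_def mass_def
      by (simp add: sum.distrib sum_divide_distrib[symmetric])
    then show ?thesis by (simp add: max_def)
  qed
  moreover have "0 \<le> policy_of x t k b a" for t k b a
    using unit_cube_nonneg[OF x] card[of k] sum_nonneg[of "feasible E k" "\<lambda>a. x (t, k, b, a)"]
    unfolding policy_of_def mass_def by simp
  ultimately show ?thesis
    unfolding Omega_def policy_of_def by auto
qed

lemma continuous_on_policy_of: "continuous_on S policy_of"
  unfolding policy_of_def mass_def
  by (intro continuous_on_policyI continuous_intros) (auto simp: max_def)

lemma exists_MFE: "\<exists>\<pi>. is_MFE E \<pi>"
proof -
  let ?D = decision_points
  define F where "F x = (\<lambda>(t, k, b, a). if (t, k, b, a) \<in> ?D then nash_map (policy_of x) t k b a else 0)"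
    for x :: "nat \<times> ('z,'l) loc \<times> nat \<times> ('z,'l) loc \<Rightarrow> real"
  have "continuous_on (unit_cube ?D) (\<lambda>x. nash_map (policy_of x) t k b a)" for t k b a
    using policy_of_in_Omega
    by (intro continuous_on_compose2[OF continuous_on_nash_map continuous_on_policy_of]) auto
  then have "continuous_on (unit_cube ?D) F"
    unfolding F_def split_beta by (intro continuous_on_coordinatewise_then_product continuous_intros)
  moreover have "F \<in> unit_cube ?D \<rightarrow> unit_cube ?D"
    using nash_map_in_Omega[OF policy_of_in_Omega] Omega_nonneg Omega_le_1
    unfolding F_def unit_cube_def by auto
  ultimately obtain x where x: "x \<in> unit_cube ?D" and "F x = x"
    using brouwer_unit_cube[OF finite_decision_points] by blast
  define \<pi> where "\<pi> = policy_of x"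
  have \<pi>: "\<pi> \<in> Omega E"
    unfolding \<pi>_def by (rule policy_of_in_Omega[OF x])
  have x_eq: "x (t, k, b, a) = nash_map \<pi> t k b a" if "(t, k, b, a) \<in> ?D" for t k b a
    using fun_cong[OF \<open>F x = x\<close>, of "(t, k, b, a)"] that unfolding F_def \<pi>_def by simp
  have fixed: "nash_map \<pi> t k b a = \<pi> t k b a"
    if "t < horizon E" "b \<le> Bmax E" "a \<in> feasible E k" for t k b a
  proof -
    have "mass x t k b = (\<Sum>a\<in>feasible E k. nash_map \<pi> t k b a)"
      unfolding mass_def using that x_eq by (intro sum.cong) (auto simp: decision_points_def)
    also have "\<dots> = 1"
      using nash_map_in_Omega[OF \<pi>] by (rule Omega_sum)
    finally show ?thesis
      using that x_eq unfolding \<pi>_def policy_of_def decision_points_def by simp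
  qed
  have "is_MFE E \<pi>"
    by (rule is_MFE_if_no_improving_action[OF \<pi> nash_map_fixed_point_imp_no_improving_action[OF \<pi>]])
       (auto intro: fixed)
  then show ?thesis by blast
qed

end

theorem proposition1:
  fixes E :: "('z::finite, 'l::finite, 'th) eriver"
  assumes eff_pos: "0 < eff E"
    and fleet_pos: "0 < fleet E"
    and tz_pos: "\<forall>i j. 0 < tz E i j"
    and tl_pos: "\<forall>i l. 0 < tl E i l"
    and nbr_refl: "\<forall>i. i \<in> nbr E i"
    and nbr_sym: "\<forall>i j. j \<in> nbr E i \<longleftrightarrow> i \<in> nbr E j"
    and bdry_ne: "\<forall>l. bdry E l \<noteq> {}"
    and dem_nonneg: "\<forall>t i. 0 \<le> dem E t i"
    and alpha_nonneg: "\<forall>t i j. 0 \<le> alpha E t i j"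
    and alpha_sum: "\<forall>t i. (\<Sum>j\<in>UNIV. alpha E t i j) = 1"
    and f_range: "\<forall>q y th. 0 \<le> q \<longrightarrow> 0 \<le> y \<longrightarrow> 0 \<le> fmeet E q y th \<and> fmeet E q y th \<le> 1"
    and f_mono_q: "\<forall>q q' y th. 0 \<le> q \<longrightarrow> q \<le> q' \<longrightarrow> 0 \<le> y \<longrightarrow> fmeet E q y th \<le> fmeet E q' y th"
    and f_antimono_y: "\<forall>q y y' th. 0 \<le> q \<longrightarrow> 0 \<le> y \<longrightarrow> y \<le> y' \<longrightarrow> fmeet E q y' th \<le> fmeet E q y th"
    and g_range: "\<forall>t h \<omega>. h \<in> hist_dom E t \<longrightarrow> 0 \<le> gwait E t h \<omega> \<and> gwait E t h \<omega> \<le> 1"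
    and g_pmf: "\<forall>t h. h \<in> hist_dom E t \<longrightarrow> (\<lambda>\<omega>. gwait E t h \<omega>) sums 1"
    and rho_nonneg: "\<forall>k b. 0 \<le> rho E k b"
    and rho_supp: "\<forall>k b. Bmax E < b \<longrightarrow> rho E k b = 0"
    and rho_sum: "(\<Sum>k\<in>UNIV. \<Sum>b\<in>{0..Bmax E}. rho E k b) = 1"
    and f_cont: "\<forall>q th. 0 \<le> q \<longrightarrow> continuous_on {0..} (\<lambda>y. fmeet E q y th)"
    and g_cont: "\<forall>t \<omega>. continuous_on (hist_dom E t) (\<lambda>h. gwait E t h \<omega>)"
  shows "\<exists>\<pi>s. is_MFE E \<pi>s"
proof -
  interpret eriver_regular E
    using fleet_pos tl_pos nbr_refl bdry_ne dem_nonneg alpha_nonneg f_range g_range g_pmf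
      rho_nonneg f_cont g_cont
    by unfold_locales
  show ?thesis by (rule exists_MFE)
qed

end
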